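(* Let $X$ be a complete CAT(0) space, $f:X\to(-\infty,\infty]$ a proper, convex, lower semicontinuous function, $C\subseteq X$ nonempty, and $\psi:[0,\infty)\to[0,\infty)$ an increasing function vanishing only at $0$. Assume $f$ is uniformly convex on $C$ with modulus $\psi$, and let $\gamma>0$ be such that $J_\gamma(C)\subseteq C$. Then: (1) for all $u,v\in C$, $d^2(J_\gamma u,v)\le d^2(u,v)-d^2(u,J_\gamma u)-2\gamma(f(J_\gamma u)-f(v))-2\gamma\psi(d(v,J_\gamma u))$; (2) for all $x,y\in C$, $d^2(J_\gamma x,J_\gamma y)\le d^2(x,y)-4\gamma\psi(d(J_\gamma x,J_\gamma y))$.
   Context: A geodesic space $(X,d)$ is CAT(0) if for all $z\in X$, all geodesics $\gamma:[a,b]\to X$ and all $t\in[0,1]$, $d^2(z,\gamma((1-t)a+tb))\le(1-t)d^2(z,\gamma(a))+td^2(z,\gamma(b))-t(1-t)d^2(\gamma(a),\gamma(b))$; $(1-t)x+ty$ denotes the point at distance $t\,d(x,y)$ from $x$ on the unique geodesic from $x$ to $y$. $J_\gamma(x):=\arg\min_{y\in X}\left[f(y)+\frac1{2\gamma}d^2(x,y)\right]$ (exists uniquely). $f$ is uniformly convex on $C$ with modulus $\psi$ if for all $x,y\in C$, $t\in[0,1]$: $f((1-t)x+ty)\le(1-t)f(x)+tf(y)-t(1-t)\psi(d(x,y))$. *)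

theory Defs
  imports "HOL-Analysis.Analysis" "HOL-Library.Extended_Real"
begin

definition geodesic :: "(real \<Rightarrow> 'a::metric_space) \<Rightarrow> real \<Rightarrow> real \<Rightarrow> bool" where
  "geodesic g a b \<longleftrightarrow> a \<le> b \<and> (\<forall>s\<in>{a..b}. \<forall>t\<in>{a..b}. dist (g s) (g t) = \<bar>s - t\<bar>)"

definition geodesic_space :: "'a::metric_space itself \<Rightarrow> bool" where
  "geodesic_space _ \<longleftrightarrow> (\<forall>x y::'a. \<exists>g. geodesic g 0 (dist x y) \<and> g 0 = x \<and> g (dist x y) = y)"

definition CAT0 :: "'a::metric_space itself \<Rightarrow> bool" where
  "CAT0 T \<longleftrightarrow> geodesic_space T \<and>
     (\<forall>(z::'a) g a b t. geodesic g a b \<longrightarrow> t \<in> {0..1} \<longrightarrow>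
        (dist z (g ((1 - t) * a + t * b)))\<^sup>2
          \<le> (1 - t) * (dist z (g a))\<^sup>2 + t * (dist z (g b))\<^sup>2
             - t * (1 - t) * (dist (g a) (g b))\<^sup>2)"

(* (1-t)x + ty : the point at distance t d(x,y) from x on the (unique) geodesic from x to y *)
definition geo_comb :: "real \<Rightarrow> 'a::metric_space \<Rightarrow> 'a \<Rightarrow> 'a" where
  "geo_comb t x y = (THE z. \<exists>g. geodesic g 0 (dist x y) \<and> g 0 = x \<and> g (dist x y) = y
                               \<and> z = g (t * dist x y))"

definition proper_fun :: "('a \<Rightarrow> ereal) \<Rightarrow> bool" where
  "proper_fun f \<longleftrightarrow> (\<forall>x. f x \<noteq> -\<infinity>) \<and> (\<exists>x. f x \<noteq> \<infinity>)"

definition convex_fun :: "('a::metric_space \<Rightarrow> ereal) \<Rightarrow> bool" where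
  "convex_fun f \<longleftrightarrow> (\<forall>x y t. t \<in> {0..1} \<longrightarrow>
      f (geo_comb t x y) \<le> ereal (1 - t) * f x + ereal t * f y)"

definition lsc_fun :: "('a::topological_space \<Rightarrow> ereal) \<Rightarrow> bool" where
  "lsc_fun f \<longleftrightarrow> (\<forall>c. closed {x. f x \<le> c})"

definition uniformly_convex_on :: "'a::metric_space set \<Rightarrow> (real \<Rightarrow> real) \<Rightarrow> ('a \<Rightarrow> ereal) \<Rightarrow> bool" where
  "uniformly_convex_on C \<psi> f \<longleftrightarrow> (\<forall>x\<in>C. \<forall>y\<in>C. \<forall>t\<in>{0..1}.
      f (geo_comb t x y) \<le> ereal (1 - t) * f x + ereal t * f y - ereal (t * (1 - t) * \<psi> (dist x y)))"

definition resolvent :: "('a::metric_space \<Rightarrow> ereal) \<Rightarrow> real \<Rightarrow> 'a \<Rightarrow> 'a" where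
  "resolvent f \<gamma> x = arg_min (\<lambda>y. f y + ereal ((dist x y)\<^sup>2 / (2 * \<gamma>))) (\<lambda>_. True)"

end

theory Submission
  imports Defs
begin

text \<open>The objective \<open>y \<mapsto> f y + d\<^sup>2(x, y) / (2\<gamma>)\<close> of the resolvent is bounded below, since a
  convex lower semicontinuous function decreases at most linearly, and by the CAT(0) inequality at
  midpoints its minimizing sequences are Cauchy; so the resolvent is a genuine minimizer.
  For (1), compare the value at \<open>z = J u\<close> with the value at \<open>(1 - t) z + t v\<close> using the uniform
  convexity of \<open>f\<close> and the CAT(0) inequality, divide by \<open>t\<close> and let \<open>t \<rightarrow> 0\<close>.
  Adding (1) for \<open>(x, J y)\<close> and \<open>(y, J x)\<close> cancels the values of \<open>f\<close>, and the four-point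
  inequality \<open>d\<^sup>2(x,b) + d\<^sup>2(y,a) \<le> d\<^sup>2(x,a) + d\<^sup>2(y,b) + d\<^sup>2(x,y) + d\<^sup>2(a,b)\<close> gives (2).\<close>

lemma CAT0_geodesic_exists:
  assumes "CAT0 TYPE('a::metric_space)"
  obtains g where "geodesic g 0 (dist x y)" "g 0 = x" "g (dist x y) = (y::'a)"
  using assms unfolding CAT0_def geodesic_space_def by metis

lemma CAT0_geodesic_ineq:
  fixes z :: "'a::metric_space"
  assumes "CAT0 TYPE('a)" "geodesic g a b" "0 \<le> t" "t \<le> 1"
  shows "(dist z (g ((1 - t) * a + t * b)))\<^sup>2
           \<le> (1 - t) * (dist z (g a))\<^sup>2 + t * (dist z (g b))\<^sup>2 - t * (1 - t) * (dist (g a) (g b))\<^sup>2"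
  using assms unfolding CAT0_def by auto

lemma geodesic_dist:
  assumes "geodesic g a b" "s \<in> {a..b}" "r \<in> {a..b}"
  shows "dist (g s) (g r) = \<bar>s - r\<bar>"
  using assms unfolding geodesic_def by blast

text \<open>The CAT(0) inequality with \<open>z\<close> on a second geodesic from \<open>x\<close> to \<open>y\<close> forces
  \<open>d\<^sup>2(z, g(t d(x,y))) \<le> 0\<close>.\<close>
lemma CAT0_geodesic_unique:
  fixes x y :: "'a::metric_space"
  assumes cat: "CAT0 TYPE('a)" and t: "0 \<le> t" "t \<le> 1"
    and g: "geodesic g 0 (dist x y)" "g 0 = x" "g (dist x y) = y"
    and h: "geodesic h 0 (dist x y)" "h 0 = x" "h (dist x y) = y"
  shows "h (t * dist x y) = g (t * dist x y)"
proof -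
  let ?d = "dist x y" and ?z = "h (t * dist x y)"
  have td: "t * ?d \<in> {0..?d}" using t by (auto simp: mult_left_le_one_le)
  have d0: "dist ?z (g 0) = t * ?d"
    using geodesic_dist[OF h(1) td, of 0] h(2) g(2) td by auto
  have d1: "dist ?z (g ?d) = (1 - t) * ?d"
    using geodesic_dist[OF h(1) td, of ?d] h(3) g(3) td by (auto simp: algebra_simps)
  have "(dist ?z (g ((1 - t) * 0 + t * ?d)))\<^sup>2
          \<le> (1 - t) * (dist ?z (g 0))\<^sup>2 + t * (dist ?z (g ?d))\<^sup>2 - t * (1 - t) * (dist (g 0) (g ?d))\<^sup>2"
    by (rule CAT0_geodesic_ineq[OF cat g(1) t])
  then have "(dist ?z (g (t * ?d)))\<^sup>2 \<le> 0"
    unfolding d0 d1 by (simp add: g(2,3) power2_eq_square algebra_simps)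
  then show ?thesis by simp
qed

lemma geo_comb_eq_geodesic:
  fixes x y :: "'a::metric_space"
  assumes cat: "CAT0 TYPE('a)" and t: "0 \<le> t" "t \<le> 1"
    and g: "geodesic g 0 (dist x y)" "g 0 = x" "g (dist x y) = y"
  shows "geo_comb t x y = g (t * dist x y)"
  unfolding geo_comb_def
proof (rule the_equality)
  show "\<exists>h. geodesic h 0 (dist x y) \<and> h 0 = x \<and> h (dist x y) = y \<and> g (t * dist x y) = h (t * dist x y)"
    using g by blast
qed (use CAT0_geodesic_unique[OF cat t g] in blast)

lemma dist_geo_comb:
  fixes x y :: "'a::metric_space"
  assumes cat: "CAT0 TYPE('a)" and t: "0 \<le> t" "t \<le> 1"
  shows "dist x (geo_comb t x y) = t * dist x y"
proof -
  obtain g where g: "geodesic g 0 (dist x y)" "g 0 = x" "g (dist x y) = y"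
    using CAT0_geodesic_exists[OF cat] .
  have "t * dist x y \<in> {0..dist x y}" using t by (auto simp: mult_left_le_one_le)
  then show ?thesis
    using geodesic_dist[OF g(1), of 0 "t * dist x y"] g(2) by (simp add: geo_comb_eq_geodesic[OF cat t g])
qed

lemma CAT0_geo_comb_ineq:
  fixes x y z :: "'a::metric_space"
  assumes cat: "CAT0 TYPE('a)" and t: "0 \<le> t" "t \<le> 1"
  shows "(dist z (geo_comb t x y))\<^sup>2
           \<le> (1 - t) * (dist z x)\<^sup>2 + t * (dist z y)\<^sup>2 - t * (1 - t) * (dist x y)\<^sup>2"
proof -
  obtain g where g: "geodesic g 0 (dist x y)" "g 0 = x" "g (dist x y) = y"
    using CAT0_geodesic_exists[OF cat] .
  show ?thesis
    using CAT0_geodesic_ineq[OF cat g(1) t, of z] g by (simp add: geo_comb_eq_geodesic[OF cat t g])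
qed

text \<open>Apply the CAT(0) inequality at the midpoints of \<open>[x,b]\<close> and \<open>[a,y]\<close>.\<close>
lemma CAT0_quadrilateral_ineq:
  fixes x y a b :: "'a::metric_space"
  assumes cat: "CAT0 TYPE('a)"
  shows "(dist x b)\<^sup>2 + (dist y a)\<^sup>2 \<le> (dist x a)\<^sup>2 + (dist y b)\<^sup>2 + (dist x y)\<^sup>2 + (dist a b)\<^sup>2"
proof -
  define m where "m = geo_comb (1/2) x b"
  define n where "n = geo_comb (1/2) a y"
  have "(dist m n)\<^sup>2 \<le> (dist m a)\<^sup>2 / 2 + (dist m y)\<^sup>2 / 2 - (dist a y)\<^sup>2 / 4"
    using CAT0_geo_comb_ineq[OF cat, of "1/2" m a y] unfolding n_def by simp
  moreover have "(dist a m)\<^sup>2 \<le> (dist a x)\<^sup>2 / 2 + (dist a b)\<^sup>2 / 2 - (dist x b)\<^sup>2 / 4"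
    using CAT0_geo_comb_ineq[OF cat, of "1/2" a x b] unfolding m_def by simp
  moreover have "(dist y m)\<^sup>2 \<le> (dist y x)\<^sup>2 / 2 + (dist y b)\<^sup>2 / 2 - (dist x b)\<^sup>2 / 4"
    using CAT0_geo_comb_ineq[OF cat, of "1/2" y x b] unfolding m_def by simp
  ultimately show ?thesis
    using zero_le_power2[of "dist m n"]
    unfolding dist_commute[of _ m] dist_commute[of y x] dist_commute[of a x] dist_commute[of y a] by linarith
qed

lemma lsc_fun_le_of_eventually:
  fixes f :: "'a::topological_space \<Rightarrow> ereal"
  assumes "lsc_fun f" "Y \<longlonglongrightarrow> y" "eventually (\<lambda>n. f (Y n) \<le> c) sequentially"
  shows "f y \<le> c"
  using Lim_in_closed_set[of "{x. f x \<le> c}" Y sequentially y] assms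
  unfolding lsc_fun_def by auto

lemma lsc_fun_le_of_tendsto:
  fixes f :: "'a::topological_space \<Rightarrow> ereal"
  assumes lsc: "lsc_fun f" and Y: "Y \<longlonglongrightarrow> y"
    and bound: "\<And>n. f (Y n) \<le> ereal (b n)" and b: "b \<longlonglongrightarrow> L"
  shows "f y \<le> ereal L"
proof (rule ereal_le_epsilon2)
  fix e :: real assume "0 < e"
  then have "eventually (\<lambda>n. b n < L + e) sequentially"
    using order_tendstoD(2)[OF b] by simp
  then have "eventually (\<lambda>n. f (Y n) \<le> ereal L + ereal e) sequentially"
  proof eventually_elim
    case (elim n)
    then show ?case using bound[of n] by (simp add: order.trans)
  qed
  then show "f y \<le> ereal L + ereal e" by (rule lsc_fun_le_of_eventually[OF lsc Y])
qed

text \<open>Otherwise there are \<open>y\<^sub>n\<close> with \<open>f y\<^sub>n < -n\<^sup>2 (1 + d(x\<^sub>0, y\<^sub>n))\<close>; by convexity the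
  points \<open>z\<^sub>n\<close> of \<open>[x\<^sub>0, y\<^sub>n]\<close> at distance at most \<open>1/n\<close> from \<open>x\<^sub>0\<close> satisfy
  \<open>f z\<^sub>n \<le> |f x\<^sub>0| - n\<close>, contradicting lower semicontinuity at \<open>x\<^sub>0\<close>.\<close>
lemma convex_fun_linear_lower_bound:
  fixes f :: "'a::metric_space \<Rightarrow> ereal"
  assumes cat: "CAT0 TYPE('a)" and cvx: "convex_fun f" and lsc: "lsc_fun f"
    and f0: "f x0 = ereal a0" and ninf: "\<And>x. f x \<noteq> -\<infinity>"
  shows "\<exists>c\<ge>0. \<forall>y. ereal (- c * (1 + dist x0 y)) \<le> f y"
proof (rule ccontr)
  assume "\<not> ?thesis"
  then have "\<forall>n::nat. \<exists>y. f y < ereal (- (real (Suc n))\<^sup>2 * (1 + dist x0 y))"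
    by (metis not_le zero_le_power2)
  then obtain Y where Y: "\<And>n. f (Y n) < ereal (- (real (Suc n))\<^sup>2 * (1 + dist x0 (Y n)))"
    by metis
  define t where "t n = 1 / (real (Suc n) * (1 + dist x0 (Y n)))" for n
  define Z where "Z n = geo_comb (t n) x0 (Y n)" for n
  have t0: "0 < t n" for n unfolding t_def by (simp add: add_pos_nonneg)
  have t1: "t n \<le> 1" for n
  proof -
    have "1 \<le> real (Suc n) * (1 + dist x0 (Y n))"
      using mult_mono[of 1 "real (Suc n)" 1 "1 + dist x0 (Y n)"] by simp
    then show ?thesis unfolding t_def by simp
  qed
  have fZ: "f (Z n) \<le> ereal (\<bar>a0\<bar> - real (Suc n))" for n
  proof -
    obtain b where b: "f (Y n) = ereal b"
      using Y[of n] ninf[of "Y n"] by (cases "f (Y n)") auto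
    have "t n * b < t n * (- (real (Suc n))\<^sup>2 * (1 + dist x0 (Y n)))"
      using Y[of n] b t0[of n] by (intro mult_strict_left_mono) auto
    also have "\<dots> = - real (Suc n)"
      using add_pos_nonneg[of 1 "dist x0 (Y n)"] unfolding t_def by (simp add: power2_eq_square divide_simps)
    finally have tb: "t n * b < - real (Suc n)" .
    have "f (Z n) \<le> ereal (1 - t n) * f x0 + ereal (t n) * f (Y n)"
      using cvx t0[of n] t1[of n] unfolding convex_fun_def Z_def by auto
    also have "\<dots> = ereal ((1 - t n) * a0 + t n * b)" using f0 b by simp
    also have "\<dots> \<le> ereal (\<bar>a0\<bar> - real (Suc n))"
    proof -
      have "(1 - t n) * a0 \<le> (1 - t n) * \<bar>a0\<bar>" using t1[of n] by (intro mult_left_mono) auto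
      also have "\<dots> \<le> \<bar>a0\<bar>" using t0[of n] by (simp add: algebra_simps)
      finally show ?thesis using tb by simp
    qed
    finally show ?thesis .
  qed
  have "Z \<longlonglongrightarrow> x0"
  proof (rule metric_LIMSEQ_I)
    fix r :: real assume "0 < r"
    then obtain N where N: "N > 0" "inverse (real N) < r" using ex_inverse_of_nat_less by blast
    show "\<exists>N. \<forall>n\<ge>N. dist (Z n) x0 < r"
    proof (intro exI allI impI)
      fix n assume "N \<le> n"
      have "dist (Z n) x0 = t n * dist x0 (Y n)"
        using dist_geo_comb[OF cat, of "t n" x0 "Y n"] t0[of n] t1[of n]
        by (simp add: Z_def dist_commute)
      also have "\<dots> \<le> 1 / real (Suc n)"
        unfolding t_def by (simp add: field_simps add_pos_nonneg)
      also have "\<dots> \<le> inverse (real N)"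
        using N \<open>N \<le> n\<close> by (simp add: divide_simps)
      finally show "dist (Z n) x0 < r" using N by linarith
    qed
  qed
  moreover obtain N :: nat where N: "\<bar>a0\<bar> - a0 + 1 \<le> real N" using real_arch_simple by blast
  have "eventually (\<lambda>n. f (Z n) \<le> ereal (a0 - 1)) sequentially"
    unfolding eventually_sequentially
  proof (intro exI allI impI)
    fix n assume "N \<le> n"
    then have "\<bar>a0\<bar> - real (Suc n) \<le> a0 - 1" using N by simp
    then show "f (Z n) \<le> ereal (a0 - 1)" using fZ[of n] order.trans by fastforce
  qed
  ultimately have "f x0 \<le> ereal (a0 - 1)" by (rule lsc_fun_le_of_eventually[OF lsc])
  then show False using f0 by simp
qed

lemma moreau_objective_bounded_below:
  fixes f :: "'a::metric_space \<Rightarrow> ereal"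
  assumes cat: "CAT0 TYPE('a)" and prp: "proper_fun f" and cvx: "convex_fun f"
    and lsc: "lsc_fun f" and gam: "\<gamma> > 0"
  shows "\<exists>M. \<forall>y. ereal M \<le> f y + ereal ((dist x y)\<^sup>2 / (2 * \<gamma>))"
proof -
  have ninf: "\<And>y. f y \<noteq> -\<infinity>" using prp unfolding proper_fun_def by blast
  obtain x0 where "f x0 \<noteq> \<infinity>" using prp unfolding proper_fun_def by blast
  then obtain a0 where f0: "f x0 = ereal a0" using ninf[of x0] by (cases "f x0") auto
  obtain c where c0: "c \<ge> 0" and cb: "\<And>y. ereal (- c * (1 + dist x0 y)) \<le> f y"
    using convex_fun_linear_lower_bound[OF cat cvx lsc f0 ninf] by blast
  have "ereal (- c * (1 + dist x0 x) - c\<^sup>2 * \<gamma> / 2) \<le> f y + ereal ((dist x y)\<^sup>2 / (2 * \<gamma>))" for y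
  proof -
    let ?s = "dist x y"
    have "c * dist x0 y \<le> c * (dist x0 x + ?s)"
      using dist_triangle[of x0 y x] c0 by (rule mult_left_mono)
    moreover have "?s\<^sup>2 / (2 * \<gamma>) - c * ?s + c\<^sup>2 * \<gamma> / 2 = (?s - c * \<gamma>)\<^sup>2 / (2 * \<gamma>)"
      using gam by (simp add: power2_eq_square field_simps)
    moreover have "(?s - c * \<gamma>)\<^sup>2 / (2 * \<gamma>) \<ge> 0" using gam by simp
    ultimately have "- c * (1 + dist x0 x) - c\<^sup>2 * \<gamma> / 2 \<le> - c * (1 + dist x0 y) + ?s\<^sup>2 / (2 * \<gamma>)"
      by (simp add: algebra_simps)
    then have "ereal (- c * (1 + dist x0 x) - c\<^sup>2 * \<gamma> / 2)
                 \<le> ereal (- c * (1 + dist x0 y)) + ereal (?s\<^sup>2 / (2 * \<gamma>))" by simp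
    also have "\<dots> \<le> f y + ereal (?s\<^sup>2 / (2 * \<gamma>))" using cb[of y] by (rule add_right_mono)
    finally show ?thesis .
  qed
  then show ?thesis by blast
qed

text \<open>Compare the objective with its value at the midpoint of \<open>[y, z]\<close>.\<close>
lemma moreau_objective_midpoint_ineq:
  fixes f :: "'a::metric_space \<Rightarrow> ereal"
  assumes cat: "CAT0 TYPE('a)" and cvx: "convex_fun f" and gam: "\<gamma> > 0"
    and lb: "\<And>w. ereal m \<le> f w + ereal ((dist x w)\<^sup>2 / (2 * \<gamma>))"
    and y: "f y + ereal ((dist x y)\<^sup>2 / (2 * \<gamma>)) = ereal p"
    and z: "f z + ereal ((dist x z)\<^sup>2 / (2 * \<gamma>)) = ereal q"
  shows "(dist y z)\<^sup>2 \<le> 4 * \<gamma> * ((p - m) + (q - m))"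
proof -
  define w where "w = geo_comb (1/2) y z"
  have fy: "f y = ereal (p - (dist x y)\<^sup>2 / (2 * \<gamma>))" using y by (cases "f y") auto
  have fz: "f z = ereal (q - (dist x z)\<^sup>2 / (2 * \<gamma>))" using z by (cases "f z") auto
  have "f w \<le> ereal (1 - 1/2) * f y + ereal (1/2) * f z"
    using cvx[unfolded convex_fun_def, rule_format, of "1/2" y z] unfolding w_def by simp
  then have fw: "f w \<le> ereal ((p - (dist x y)\<^sup>2 / (2 * \<gamma>)) / 2 + (q - (dist x z)\<^sup>2 / (2 * \<gamma>)) / 2)"
    unfolding fy fz by simp
  have "(dist x w)\<^sup>2 \<le> (dist x y)\<^sup>2 / 2 + (dist x z)\<^sup>2 / 2 - (dist y z)\<^sup>2 / 4"
    using CAT0_geo_comb_ineq[OF cat, of "1/2" x y z] unfolding w_def by simp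
  then have "(dist x w)\<^sup>2 / (2 * \<gamma>)
      \<le> ((dist x y)\<^sup>2 / 2 + (dist x z)\<^sup>2 / 2 - (dist y z)\<^sup>2 / 4) / (2 * \<gamma>)"
    using gam by (intro divide_right_mono) auto
  also have "\<dots> = (dist x y)\<^sup>2 / (2 * \<gamma>) / 2 + (dist x z)\<^sup>2 / (2 * \<gamma>) / 2 - (dist y z)\<^sup>2 / (2 * \<gamma>) / 4"
    using gam by (simp add: field_simps)
  finally have dw: "(dist x w)\<^sup>2 / (2 * \<gamma>)
      \<le> (dist x y)\<^sup>2 / (2 * \<gamma>) / 2 + (dist x z)\<^sup>2 / (2 * \<gamma>) / 2 - (dist y z)\<^sup>2 / (2 * \<gamma>) / 4" .
  obtain r where r: "f w = ereal r" using lb[of w] fw by (cases "f w") auto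
  have "m \<le> r + (dist x w)\<^sup>2 / (2 * \<gamma>)" using lb[of w] r by simp
  moreover have "r \<le> (p - (dist x y)\<^sup>2 / (2 * \<gamma>)) / 2 + (q - (dist x z)\<^sup>2 / (2 * \<gamma>)) / 2"
    using fw r by simp
  ultimately have "(dist y z)\<^sup>2 / (2 * \<gamma>) / 4 \<le> (p - m) / 2 + (q - m) / 2"
    using dw by argo
  then show ?thesis using gam by (simp add: field_simps)
qed

lemma Cauchy_if_dist_sq_le_inverse:
  fixes Y :: "nat \<Rightarrow> 'a::metric_space"
  assumes dY: "\<And>i j. (dist (Y i) (Y j))\<^sup>2 \<le> c * (inverse (real (Suc i)) + inverse (real (Suc j)))"
  shows "Cauchy Y"
proof (rule metric_CauchyI)
  fix e :: real assume e: "0 < e"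
  then obtain N :: nat where N: "N > 0" "inverse (real N) < e\<^sup>2 / (2 * (\<bar>c\<bar> + 1))"
    using ex_inverse_of_nat_less[of "e\<^sup>2 / (2 * (\<bar>c\<bar> + 1))"] by auto
  have inv: "inverse (real (Suc k)) \<le> inverse (real N)" if "N \<le> k" for k
    using that N by (simp add: divide_simps)
  show "\<exists>M. \<forall>i\<ge>M. \<forall>j\<ge>M. dist (Y i) (Y j) < e"
  proof (intro exI allI impI)
    fix i j assume ij: "N \<le> i" "N \<le> j"
    have "(dist (Y i) (Y j))\<^sup>2 \<le> \<bar>c\<bar> * (2 * inverse (real N))"
      using dY[of i j] inv[OF ij(1)] inv[OF ij(2)]
      by (smt (verit) abs_ge_self abs_ge_zero inverse_nonnegative_iff_nonnegative mult_left_mono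
          mult_right_mono of_nat_0_le_iff)
    also have "\<dots> \<le> (\<bar>c\<bar> + 1) * (2 * inverse (real N))" by (intro mult_right_mono) auto
    also have "\<dots> < e\<^sup>2"
      using N(2) pos_less_divide_eq[of "2 * (\<bar>c\<bar> + 1)"] by (simp add: mult.commute mult.left_commute)
    finally show "dist (Y i) (Y j) < e" using e by (simp add: power_less_imp_less_base)
  qed
qed

lemma moreau_objective_has_minimizer:
  fixes f :: "'a::complete_space \<Rightarrow> ereal"
  assumes cat: "CAT0 TYPE('a)" and prp: "proper_fun f" and cvx: "convex_fun f"
    and lsc: "lsc_fun f" and gam: "\<gamma> > 0"
  shows "\<exists>z. \<forall>y. f z + ereal ((dist x z)\<^sup>2 / (2 * \<gamma>)) \<le> f y + ereal ((dist x y)\<^sup>2 / (2 * \<gamma>))"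
proof -
  define F where "F y = f y + ereal ((dist x y)\<^sup>2 / (2 * \<gamma>))" for y
  obtain M where FM: "\<And>y. ereal M \<le> F y"
    using moreau_objective_bounded_below[OF cat prp cvx lsc gam] unfolding F_def by blast
  obtain x0 where "f x0 \<noteq> \<infinity>" using prp unfolding proper_fun_def by blast
  then have "Inf (range F) \<noteq> \<infinity>"
    using Inf_lower[of "F x0" "range F"] unfolding F_def by auto
  moreover have "ereal M \<le> Inf (range F)" using FM by (auto intro: Inf_greatest)
  ultimately obtain m where m: "Inf (range F) = ereal m" by (cases "Inf (range F)") auto
  have Fm: "ereal m \<le> F y" for y using Inf_lower[of "F y" "range F"] m by simp
  have "\<exists>y. F y < ereal (m + inverse (real (Suc n)))" for n
  proof -
    have "Inf (range F) < ereal (m + inverse (real (Suc n)))" using m by simp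
    then show ?thesis by (simp add: Inf_less_iff)
  qed
  then obtain Y where Y: "\<And>n. F (Y n) < ereal (m + inverse (real (Suc n)))" by metis
  have "\<exists>p. F (Y n) = ereal p" for n using Y[of n] Fm[of "Y n"] by (cases "F (Y n)") auto
  then obtain P where P: "\<And>n. F (Y n) = ereal (P n)" by metis
  have P_lt: "P n < m + inverse (real (Suc n))" and P_ge: "m \<le> P n" for n
    using Y[of n] Fm[of "Y n"] P[of n] by simp_all
  have "Cauchy Y"
  proof (rule Cauchy_if_dist_sq_le_inverse)
    fix i j
    have "(dist (Y i) (Y j))\<^sup>2 \<le> 4 * \<gamma> * ((P i - m) + (P j - m))"
      by (rule moreau_objective_midpoint_ineq[OF cat cvx gam Fm[unfolded F_def] P[unfolded F_def] P[unfolded F_def]])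
    also have "\<dots> \<le> 4 * \<gamma> * (inverse (real (Suc i)) + inverse (real (Suc j)))"
      using P_lt[of i] P_lt[of j] gam by (intro mult_left_mono) auto
    finally show "(dist (Y i) (Y j))\<^sup>2 \<le> 4 * \<gamma> * (inverse (real (Suc i)) + inverse (real (Suc j)))" .
  qed
  then obtain z where Yz: "Y \<longlonglongrightarrow> z" using Cauchy_convergent_iff convergent_def by blast
  have "f (Y n) \<le> ereal (m + inverse (real (Suc n)) - (dist x (Y n))\<^sup>2 / (2 * \<gamma>))" for n
    using P[of n] P_lt[of n] unfolding F_def by (cases "f (Y n)") auto
  moreover have "(\<lambda>n. m + inverse (real (Suc n)) - (dist x (Y n))\<^sup>2 / (2 * \<gamma>))
      \<longlonglongrightarrow> m + 0 - (dist x z)\<^sup>2 / (2 * \<gamma>)"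
    by (intro tendsto_intros LIMSEQ_inverse_real_of_nat Yz) (use gam in simp)
  ultimately have "f z \<le> ereal (m + 0 - (dist x z)\<^sup>2 / (2 * \<gamma>))"
    by (rule lsc_fun_le_of_tendsto[OF lsc Yz])
  then have "F z \<le> ereal m" unfolding F_def by (cases "f z") auto
  then show ?thesis using Fm unfolding F_def by (blast intro: order.trans)
qed

lemma resolvent_minimizes:
  fixes f :: "'a::complete_space \<Rightarrow> ereal"
  assumes cat: "CAT0 TYPE('a)" and prp: "proper_fun f" and cvx: "convex_fun f"
    and lsc: "lsc_fun f" and gam: "\<gamma> > 0"
  shows "f (resolvent f \<gamma> x) + ereal ((dist x (resolvent f \<gamma> x))\<^sup>2 / (2 * \<gamma>))
           \<le> f y + ereal ((dist x y)\<^sup>2 / (2 * \<gamma>))"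
proof -
  define F where "F y = f y + ereal ((dist x y)\<^sup>2 / (2 * \<gamma>))" for y
  obtain z where "\<And>y. F z \<le> F y"
    using moreau_objective_has_minimizer[OF cat prp cvx lsc gam] unfolding F_def by blast
  then have "is_arg_min F (\<lambda>_. True) z" unfolding is_arg_min_def by (simp add: not_less)
  then have "is_arg_min F (\<lambda>_. True) (resolvent f \<gamma> x)"
    unfolding resolvent_def arg_min_def F_def[symmetric] by (rule someI)
  then show ?thesis unfolding is_arg_min_def F_def by (simp add: not_less)
qed

lemma resolvent_finite:
  fixes f :: "'a::complete_space \<Rightarrow> ereal"
  assumes cat: "CAT0 TYPE('a)" and prp: "proper_fun f" and cvx: "convex_fun f"
    and lsc: "lsc_fun f" and gam: "\<gamma> > 0"
  obtains a where "f (resolvent f \<gamma> x) = ereal a"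
proof -
  obtain x0 where "f x0 \<noteq> \<infinity>" using prp unfolding proper_fun_def by blast
  then have "f (resolvent f \<gamma> x) \<noteq> \<infinity>"
    using resolvent_minimizes[OF cat prp cvx lsc gam, of x x0] by auto
  moreover have "f (resolvent f \<gamma> x) \<noteq> -\<infinity>" using prp unfolding proper_fun_def by blast
  ultimately show ?thesis using that by (cases "f (resolvent f \<gamma> x)") auto
qed

lemma nonpos_if_le_mult_small:
  fixes G K :: real
  assumes "\<And>t. 0 < t \<Longrightarrow> t \<le> 1 \<Longrightarrow> G \<le> t * K"
  shows "G \<le> 0"
proof -
  have "(\<lambda>n. inverse (real (Suc n)) * K) \<longlonglongrightarrow> 0 * K"
    by (intro tendsto_intros LIMSEQ_inverse_real_of_nat)
  moreover have "G \<le> inverse (real (Suc n)) * K" for n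
    by (rule assms) (simp_all add: inverse_le_1_iff)
  ultimately show ?thesis by (simp add: LIMSEQ_le_const)
qed

text \<open>The minimality of \<open>z\<close> tested against the point \<open>(1 - t) z + t v\<close>, after division by \<open>t\<close>.\<close>
lemma minimizer_le_geo_comb:
  fixes f :: "'a::metric_space \<Rightarrow> ereal"
  assumes cat: "CAT0 TYPE('a)" and gam: "\<gamma> > 0"
    and ucv: "uniformly_convex_on C \<psi> f" and zC: "z \<in> C" and vC: "v \<in> C"
    and min: "\<And>y. f z + ereal ((dist u z)\<^sup>2 / (2 * \<gamma>)) \<le> f y + ereal ((dist u y)\<^sup>2 / (2 * \<gamma>))"
    and fz: "f z = ereal a" and fv: "f v = ereal b" and t: "0 < t" "t \<le> 1"
  shows "2 * \<gamma> * (a - b) + 2 * \<gamma> * \<psi> (dist z v) + (dist u z)\<^sup>2 - (dist u v)\<^sup>2 + (dist z v)\<^sup>2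
           \<le> t * (2 * \<gamma> * \<psi> (dist z v) + (dist z v)\<^sup>2)"
proof -
  define w where "w = geo_comb t z v"
  have "f w \<le> ereal (1 - t) * f z + ereal t * f v - ereal (t * (1 - t) * \<psi> (dist z v))"
    using ucv zC vC t unfolding uniformly_convex_on_def w_def by auto
  then have fw: "f w \<le> ereal ((1 - t) * a + t * b - t * (1 - t) * \<psi> (dist z v))"
    using fz fv by simp
  then obtain r where r: "f w = ereal r" using min[of w] fz by (cases "f w") auto
  have "a + (dist u z)\<^sup>2 / (2 * \<gamma>) \<le> r + (dist u w)\<^sup>2 / (2 * \<gamma>)"
    using min[of w] fz r by simp
  then have "2 * \<gamma> * (a + (dist u z)\<^sup>2 / (2 * \<gamma>)) \<le> 2 * \<gamma> * (r + (dist u w)\<^sup>2 / (2 * \<gamma>))"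
    using gam by (intro mult_left_mono) auto
  then have "2 * \<gamma> * a + (dist u z)\<^sup>2 \<le> 2 * \<gamma> * r + (dist u w)\<^sup>2"
    using gam by (simp add: algebra_simps)
  moreover have "2 * \<gamma> * r \<le> 2 * \<gamma> * ((1 - t) * a + t * b - t * (1 - t) * \<psi> (dist z v))"
    using fw r gam by simp
  moreover have "(dist u w)\<^sup>2 \<le> (1 - t) * (dist u z)\<^sup>2 + t * (dist u v)\<^sup>2 - t * (1 - t) * (dist z v)\<^sup>2"
    unfolding w_def using CAT0_geo_comb_ineq[OF cat] t by simp
  ultimately have "t * (2 * \<gamma> * (a - b) + 2 * \<gamma> * \<psi> (dist z v) + (dist u z)\<^sup>2 - (dist u v)\<^sup>2 + (dist z v)\<^sup>2)
      \<le> t * (t * (2 * \<gamma> * \<psi> (dist z v) + (dist z v)\<^sup>2))"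
    by (simp add: algebra_simps)
  then show ?thesis using t by simp
qed

lemma minimizer_uniformly_convex_ineq:
  fixes f :: "'a::metric_space \<Rightarrow> ereal"
  assumes cat: "CAT0 TYPE('a)" and gam: "\<gamma> > 0"
    and ucv: "uniformly_convex_on C \<psi> f" and zC: "z \<in> C" and vC: "v \<in> C"
    and min: "\<And>y. f z + ereal ((dist u z)\<^sup>2 / (2 * \<gamma>)) \<le> f y + ereal ((dist u y)\<^sup>2 / (2 * \<gamma>))"
    and fz: "f z = ereal a" and fv: "f v \<noteq> -\<infinity>"
  shows "ereal ((dist z v)\<^sup>2)
           \<le> ereal ((dist u v)\<^sup>2 - (dist u z)\<^sup>2 - 2 * \<gamma> * \<psi> (dist v z)) - ereal (2 * \<gamma>) * (f z - f v)"
proof (cases "f v")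
  case PInf
  then show ?thesis using fz gam by simp
next
  case (real b)
  have "2 * \<gamma> * (a - b) + 2 * \<gamma> * \<psi> (dist z v) + (dist u z)\<^sup>2 - (dist u v)\<^sup>2 + (dist z v)\<^sup>2 \<le> 0"
  proof (rule nonpos_if_le_mult_small)
    fix t :: real assume "0 < t" "t \<le> 1"
    then show "2 * \<gamma> * (a - b) + 2 * \<gamma> * \<psi> (dist z v) + (dist u z)\<^sup>2 - (dist u v)\<^sup>2 + (dist z v)\<^sup>2
        \<le> t * (2 * \<gamma> * \<psi> (dist z v) + (dist z v)\<^sup>2)"
      by (rule minimizer_le_geo_comb[OF cat gam ucv zC vC min fz real])
  qed
  then show ?thesis using fz real by (simp add: dist_commute algebra_simps)
qed (use fv in simp)

lemma resolvent_uniformly_convex_ineq: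
  fixes f :: "'a::complete_space \<Rightarrow> ereal"
  assumes cat: "CAT0 TYPE('a)" and prp: "proper_fun f" and cvx: "convex_fun f"
    and lsc: "lsc_fun f" and gam: "\<gamma> > 0"
    and ucv: "uniformly_convex_on C \<psi> f" and JC: "resolvent f \<gamma> ` C \<subseteq> C"
    and u: "u \<in> C" and v: "v \<in> C"
  shows "ereal ((dist (resolvent f \<gamma> u) v)\<^sup>2)
           \<le> ereal ((dist u v)\<^sup>2 - (dist u (resolvent f \<gamma> u))\<^sup>2 - 2 * \<gamma> * \<psi> (dist v (resolvent f \<gamma> u)))
              - ereal (2 * \<gamma>) * (f (resolvent f \<gamma> u) - f v)"
proof -
  obtain a where "f (resolvent f \<gamma> u) = ereal a" using resolvent_finite[OF cat prp cvx lsc gam] .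
  moreover have "f v \<noteq> -\<infinity>" using prp unfolding proper_fun_def by blast
  moreover have "resolvent f \<gamma> u \<in> C" using JC u by blast
  ultimately show ?thesis
    using minimizer_uniformly_convex_ineq[OF cat gam ucv _ v resolvent_minimizes[OF cat prp cvx lsc gam]]
    by blast
qed

lemma resolvent_dist_sq_le:
  fixes f :: "'a::complete_space \<Rightarrow> ereal"
  assumes cat: "CAT0 TYPE('a)" and prp: "proper_fun f" and cvx: "convex_fun f"
    and lsc: "lsc_fun f" and gam: "\<gamma> > 0"
    and ucv: "uniformly_convex_on C \<psi> f" and JC: "resolvent f \<gamma> ` C \<subseteq> C"
    and x: "x \<in> C" and y: "y \<in> C"
  shows "(dist (resolvent f \<gamma> x) (resolvent f \<gamma> y))\<^sup>2
           \<le> (dist x y)\<^sup>2 - 4 * \<gamma> * \<psi> (dist (resolvent f \<gamma> x) (resolvent f \<gamma> y))"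
proof -
  let ?J = "resolvent f \<gamma>"
  obtain a b where fa: "f (?J x) = ereal a" and fb: "f (?J y) = ereal b"
    using resolvent_finite[OF cat prp cvx lsc gam] by metis
  have "?J x \<in> C" "?J y \<in> C" using JC x y by auto
  note ineq = resolvent_uniformly_convex_ineq[OF cat prp cvx lsc gam ucv JC]
  show ?thesis
    using ineq[OF x \<open>?J y \<in> C\<close>] ineq[OF y \<open>?J x \<in> C\<close>] fa fb
      CAT0_quadrilateral_ineq[OF cat, of x "?J y" y "?J x"]
    by (simp add: dist_commute algebra_simps)
qed

theorem lemma4p6:
  fixes f :: "'a::complete_space \<Rightarrow> ereal" and C :: "'a set" and \<psi> :: "real \<Rightarrow> real" and \<gamma> :: real
  assumes "CAT0 TYPE('a)"
    and "proper_fun f" and "convex_fun f" and "lsc_fun f"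
    and "C \<noteq> {}"
    and "mono_on {0..} \<psi>" and "\<And>t. t \<ge> 0 \<Longrightarrow> \<psi> t \<ge> 0"
    and "\<And>t. t \<ge> 0 \<Longrightarrow> \<psi> t = 0 \<longleftrightarrow> t = 0"
    and "uniformly_convex_on C \<psi> f"
    and "\<gamma> > 0" and "resolvent f \<gamma> ` C \<subseteq> C"
  shows "(\<forall>u\<in>C. \<forall>v\<in>C.
           ereal ((dist (resolvent f \<gamma> u) v)\<^sup>2)
             \<le> ereal ((dist u v)\<^sup>2 - (dist u (resolvent f \<gamma> u))\<^sup>2
                      - 2 * \<gamma> * \<psi> (dist v (resolvent f \<gamma> u)))
                - ereal (2 * \<gamma>) * (f (resolvent f \<gamma> u) - f v))
     \<and> (\<forall>x\<in>C. \<forall>y\<in>C.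
           (dist (resolvent f \<gamma> x) (resolvent f \<gamma> y))\<^sup>2
             \<le> (dist x y)\<^sup>2 - 4 * \<gamma> * \<psi> (dist (resolvent f \<gamma> x) (resolvent f \<gamma> y)))"
  using resolvent_uniformly_convex_ineq[OF assms(1-4,10,9,11)]
    resolvent_dist_sq_le[OF assms(1-4,10,9,11)]
  by blast

end
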